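(* If $n\ge 1$ and $k\ge 3$ are integers, then the maximum degree of the $k$-Pell graph $\Pi_{n,k}$ is $\Delta(\Pi_{n,k})=2n$ and its minimum degree is $\delta(\Pi_{n,k})=\lceil n/2\rceil$.
   Context: For an integer $k\ge 2$, a $k$-Pell string is a finite word over the alphabet $\{0,1,\ldots,k-1,kk\}$, i.e. a word over $\{0,1,\ldots,k\}$ in which every maximal run of the letter $k$ has even length. For $n\ge 0$, the $k$-Pell graph $\Pi_{n,k}$ has as vertices all $k$-Pell strings of length $n$, and two vertices are adjacent if one is obtained from the other either by replacing a single letter $i$ by $i+1$ (or vice versa) for some $i\in\{0,1,\ldots,k-2\}$, or by replacing one factor $(k-1)(k-1)$ by $kk$ (or vice versa), in such a way that the resulting string is again a $k$-Pell string. *)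

theory Defs
  imports Main
begin

text \<open>Letters 0..k are natural numbers; the letter k may only occur in blocks kk.
  A k-Pell string is a word over the alphabet {0,...,k-1,kk}, i.e. a concatenation of
  tokens [i] (i < k) and [k,k].\<close>

definition pell_string :: "nat \<Rightarrow> nat list \<Rightarrow> bool" where
  "pell_string k w \<longleftrightarrow>
     (\<exists>ts. (\<forall>t\<in>set ts. (\<exists>i<k. t = [i]) \<or> t = [k, k]) \<and> w = concat ts)"

definition pell_vertices :: "nat \<Rightarrow> nat \<Rightarrow> nat list set" where
  "pell_vertices n k = {w. length w = n \<and> pell_string k w}"

definition pell_step :: "nat \<Rightarrow> nat list \<Rightarrow> nat list \<Rightarrow> bool" where
  "pell_step k u v \<longleftrightarrow>
     (\<exists>x y i. i + 2 \<le> k \<and> u = x @ [i] @ y \<and> v = x @ [i + 1] @ y)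
   \<or> (\<exists>x y. u = x @ [k - 1, k - 1] @ y \<and> v = x @ [k, k] @ y)"

definition pell_adj :: "nat \<Rightarrow> nat \<Rightarrow> nat list \<Rightarrow> nat list \<Rightarrow> bool" where
  "pell_adj n k u v \<longleftrightarrow> u \<in> pell_vertices n k \<and> v \<in> pell_vertices n k \<and>
     (pell_step k u v \<or> pell_step k v u)"

definition pell_degree :: "nat \<Rightarrow> nat \<Rightarrow> nat list \<Rightarrow> nat" where
  "pell_degree n k u = card {v. pell_adj n k u v}"

definition pell_max_degree :: "nat \<Rightarrow> nat \<Rightarrow> nat" where
  "pell_max_degree n k = Max (pell_degree n k ` pell_vertices n k)"

definition pell_min_degree :: "nat \<Rightarrow> nat \<Rightarrow> nat" where
  "pell_min_degree n k = Min (pell_degree n k ` pell_vertices n k)"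

end

theory Submission
  imports Defs
begin

text \<open>A neighbour of u differs from it by raising or lowering the letter at one position p
  (together with its partner when a block (k-1)(k-1) and kk are exchanged), so u has at most
  2n neighbours; for k \<ge> 3 the word 1...1 has all of them, each 1 going to 0 or 2.
  Conversely, cutting u into its tokens i and kk (at least n/2 of them) and lowering one token
  (raising it if it is 0) yields distinct neighbours, so the degree is at least \<lceil>n/2\<rceil>.
  This is attained by kk...kk followed by 0 if n is odd: the only moves lower a block kk
  aligned with the token boundaries or raise the final 0.\<close>

definition pell_token :: "nat \<Rightarrow> nat list \<Rightarrow> bool" where
  "pell_token k t \<longleftrightarrow> (\<exists>i<k. t = [i]) \<or> t = [k, k]"

lemma pell_string_iff_tokens:
  "pell_string k w \<longleftrightarrow> (\<exists>ts. (\<forall>t\<in>set ts. pell_token k t) \<and> w = concat ts)"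
  unfolding pell_string_def pell_token_def ..

lemma pell_string_concat: "\<forall>t\<in>set ts. pell_token k t \<Longrightarrow> pell_string k (concat ts)"
  unfolding pell_string_iff_tokens by blast

lemma pell_string_append: "pell_string k u \<Longrightarrow> pell_string k v \<Longrightarrow> pell_string k (u @ v)"
  unfolding pell_string_iff_tokens by (metis Un_iff concat_append set_append)

lemma pell_string_if_letters_less: "set w \<subseteq> {..<k} \<Longrightarrow> pell_string k w"
  using pell_string_concat[of "map (\<lambda>a. [a]) w" k] by (auto simp: pell_token_def)

lemma pell_string_letters_le: "pell_string k w \<Longrightarrow> set w \<subseteq> {..k}"
  unfolding pell_string_iff_tokens pell_token_def by fastforce

lemma pell_string_Cons_top:
  assumes "pell_string k (k # w)"
  shows "\<exists>w'. w = k # w' \<and> pell_string k w'"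
proof -
  obtain ts where ts: "\<forall>t\<in>set ts. pell_token k t" "k # w = concat ts"
    using assms unfolding pell_string_iff_tokens by blast
  then obtain t ts' where "ts = t # ts'"
    by (cases ts) auto
  with ts show ?thesis
    using pell_string_concat[of ts' k] by (auto simp: pell_token_def)
qed

lemma pell_string_top_prefix_even:
  "pell_string k (replicate j k @ a # w) \<Longrightarrow> a \<noteq> k \<Longrightarrow> even j"
proof (induction j rule: induct_nat_012)
  case 1
  then show ?case using pell_string_Cons_top by fastforce
next
  case (ge2 j)
  then show ?case using pell_string_Cons_top[of k "k # replicate j k @ a # w"] by auto
qed simp

lemma finite_pell_vertices: "finite (pell_vertices n k)"
proof (rule finite_subset)
  show "pell_vertices n k \<subseteq> {w. set w \<subseteq> {..k} \<and> length w = n}"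
    unfolding pell_vertices_def using pell_string_letters_le by auto
qed (simp add: finite_lists_length_eq)

lemma finite_pell_neighbours: "finite {v. pell_adj n k u v}"
  by (rule finite_subset[OF _ finite_pell_vertices[of n k]]) (auto simp: pell_adj_def)

lemma card_le_pell_degree:
  assumes "inj_on f A" "\<And>a. a \<in> A \<Longrightarrow> pell_adj n k u (f a)"
  shows "card A \<le> pell_degree n k u"
  unfolding pell_degree_def
  using card_inj_on_le[OF assms(1) _ finite_pell_neighbours] assms(2) by blast

lemma pell_step_letter: "i + 2 \<le> k \<Longrightarrow> pell_step k (x @ [i] @ y) (x @ [i + 1] @ y)"
  unfolding pell_step_def by blast

lemma pell_step_block: "pell_step k (x @ [k - 1, k - 1] @ y) (x @ [k, k] @ y)"
  unfolding pell_step_def by blast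

text \<open>The only possible neighbour obtained by raising (True) or lowering (False) u at
  position p; on other inputs the value is meaningless.\<close>

fun pell_move :: "nat \<Rightarrow> nat list \<Rightarrow> nat \<times> bool \<Rightarrow> nat list" where
  "pell_move k u (p, True) =
     (if u ! p + 2 \<le> k then u[p := u ! p + 1] else u[p := k, Suc p := k])"
| "pell_move k u (p, False) =
     (if u ! p = k then u[p := k - 1, Suc p := k - 1] else u[p := u ! p - 1])"

lemma pell_step_up_move:
  assumes "pell_step k u v" shows "\<exists>p<length u. v = pell_move k u (p, True)"
  using assms unfolding pell_step_def
proof (elim disjE exE conjE)
  fix x y i assume "i + 2 \<le> k" "u = x @ [i] @ y" "v = x @ [i + 1] @ y"
  then show ?thesis
    by (intro exI[of _ "length x"]) (simp add: nth_append list_update_append)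
next
  fix x y assume "u = x @ [k - 1, k - 1] @ y" "v = x @ [k, k] @ y"
  then show ?thesis
    by (intro exI[of _ "length x"]) (simp add: nth_append list_update_append)
qed

lemma pell_step_down_move:
  assumes "pell_step k v u" shows "\<exists>p<length u. v = pell_move k u (p, False)"
  using assms unfolding pell_step_def
proof (elim disjE exE conjE)
  fix x y i assume "i + 2 \<le> k" "v = x @ [i] @ y" "u = x @ [i + 1] @ y"
  then show ?thesis
    by (intro exI[of _ "length x"]) (simp add: nth_append list_update_append)
next
  fix x y assume "v = x @ [k - 1, k - 1] @ y" "u = x @ [k, k] @ y"
  then show ?thesis
    by (intro exI[of _ "length x"]) (simp add: nth_append list_update_append)
qed

lemma pell_neighbours_subset_moves:
  "length u = n \<Longrightarrow> {v. pell_adj n k u v} \<subseteq> pell_move k u ` ({..<n} \<times> UNIV)"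
  unfolding pell_adj_def by (blast dest: pell_step_up_move pell_step_down_move)

lemma pell_degree_le:
  assumes "length u = n" shows "pell_degree n k u \<le> 2 * n"
proof -
  have "pell_degree n k u \<le> card (pell_move k u ` ({..<n} \<times> (UNIV :: bool set)))"
    unfolding pell_degree_def by (rule card_mono[OF _ pell_neighbours_subset_moves[OF assms]]) simp
  also have "\<dots> \<le> card ({..<n} \<times> (UNIV :: bool set))"
    by (rule card_image_le) simp
  finally show ?thesis by (simp add: card_cartesian_product)
qed

definition token_neighbour :: "nat \<Rightarrow> nat list \<Rightarrow> nat list" where
  "token_neighbour k t =
     (if t = [k, k] then [k - 1, k - 1] else if t = [0] then [1] else [hd t - 1])"

lemma token_neighbour:
  assumes "2 \<le> k" "pell_token k t"
  shows "pell_string k (token_neighbour k t)" "length (token_neighbour k t) = length t"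
    "token_neighbour k t \<noteq> t"
  using assms by (auto simp: token_neighbour_def pell_token_def intro!: pell_string_if_letters_less)

lemma pell_step_token_neighbour:
  assumes "2 \<le> k" "pell_token k t"
  shows "pell_step k (x @ t @ y) (x @ token_neighbour k t @ y)
    \<or> pell_step k (x @ token_neighbour k t @ y) (x @ t @ y)"
  using assms(2) unfolding pell_token_def
proof (elim disjE exE conjE)
  fix i assume "i < k" "t = [i]"
  then show ?thesis
    using assms(1) pell_step_letter[of 0 k x y] pell_step_letter[of "i - 1" k x y]
    by (cases i) (auto simp: token_neighbour_def)
next
  assume "t = [k, k]"
  then show ?thesis
    using pell_step_block by (simp add: token_neighbour_def)
qed

lemma inj_on_replace_block:
  assumes "\<And>j. j < length ts \<Longrightarrow> length (f j) = length (ts ! j) \<and> f j \<noteq> ts ! j"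
  shows "inj_on (\<lambda>j. concat (take j ts) @ f j @ concat (drop (Suc j) ts)) {..<length ts}"
proof (rule linorder_inj_onI')
  fix i j assume "i \<in> {..<length ts}" "j \<in> {..<length ts}" "i < j"
  then have "take j ts = take i ts @ ts ! i # take (j - Suc i) (drop (Suc i) ts)"
    using take_add[of "Suc i" "j - Suc i" ts] take_Suc_conv_app_nth[of i ts] by simp
  then show "concat (take i ts) @ f i @ concat (drop (Suc i) ts)
      \<noteq> concat (take j ts) @ f j @ concat (drop (Suc j) ts)"
    using assms[of i] \<open>i \<in> {..<length ts}\<close> by auto
qed

lemma length_concat_tokens_le:
  "\<forall>t\<in>set ts. pell_token k t \<Longrightarrow> length (concat ts) \<le> 2 * length ts"
  by (induction ts) (auto simp: pell_token_def)

lemma pell_degree_ge_half: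
  assumes "2 \<le> k" "u \<in> pell_vertices n k"
  shows "(n + 1) div 2 \<le> pell_degree n k u"
proof -
  obtain ts where ts: "\<forall>t\<in>set ts. pell_token k t" "u = concat ts"
    using assms(2) unfolding pell_vertices_def pell_string_iff_tokens by blast
  define h where "h j = concat (take j ts) @ token_neighbour k (ts ! j) @ concat (drop (Suc j) ts)"
    for j
  have "pell_adj n k u (h j)" if j: "j < length ts" for j
  proof -
    have tok: "pell_token k (ts ! j)" using ts(1) j by simp
    have u: "u = concat (take j ts) @ ts ! j @ concat (drop (Suc j) ts)"
      using ts(2) id_take_nth_drop[OF j] by (metis concat.simps(2) concat_append)
    have "pell_string k (concat (take j ts))" "pell_string k (concat (drop (Suc j) ts))"
      using ts(1) by (auto intro!: pell_string_concat dest: in_set_takeD in_set_dropD)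
    then have "h j \<in> pell_vertices n k"
      using assms u token_neighbour[OF assms(1) tok]
      by (auto simp: h_def pell_vertices_def intro!: pell_string_append)
    then show ?thesis
      using assms(2) pell_step_token_neighbour[OF assms(1) tok] unfolding pell_adj_def h_def u
      by blast
  qed
  moreover have "inj_on h {..<length ts}"
    unfolding h_def using token_neighbour[OF assms(1)] ts(1) by (intro inj_on_replace_block) simp
  ultimately have "length ts \<le> pell_degree n k u"
    using card_le_pell_degree[of h "{..<length ts}"] by simp
  moreover have "n \<le> 2 * length ts"
    using assms(2) ts length_concat_tokens_le by (auto simp: pell_vertices_def)
  ultimately show ?thesis by linarith
qed

lemma pell_degree_replicate_one:
  assumes "3 \<le> k"
  shows "2 * n \<le> pell_degree n k (replicate n 1)"
proof -
  define u where "u = replicate n (1 :: nat)"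
  define h where "h = (\<lambda>(p, up). u[p := if up then 2 else 0])"
  have vertex: "w \<in> pell_vertices n k" if "length w = n" "set w \<subseteq> {0, 1, 2}" for w
    using that assms by (auto simp: pell_vertices_def intro!: pell_string_if_letters_less)
  have "pell_adj n k u (h (p, up))" if "p < n" for p up
  proof -
    have u: "u = take p u @ [1] @ drop (Suc p) u"
      and hu: "h (p, up) = take p u @ [if up then 2 else 0] @ drop (Suc p) u"
      using that id_take_nth_drop[of p u] upd_conv_take_nth_drop[of p u]
      by (simp_all add: u_def h_def)
    have "pell_step k u (h (p, up)) \<or> pell_step k (h (p, up)) u"
      using assms pell_step_letter[of 1 k "take p u" "drop (Suc p) u"]
        pell_step_letter[of 0 k "take p u" "drop (Suc p) u"]
      by (subst (1 2) u, subst (1 2) hu) (simp add: numeral_2_eq_2)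
    moreover have "u \<in> pell_vertices n k" "h (p, up) \<in> pell_vertices n k"
      by (auto simp: u_def h_def intro!: vertex dest: set_update_subset_insert[THEN subsetD])
    ultimately show ?thesis unfolding pell_adj_def by blast
  qed
  moreover have "inj_on h ({..<n} \<times> UNIV)"
  proof (rule inj_onI, clarify)
    fix p up q up' assume "p < n" "q < n" "h (p, up) = h (q, up')"
    then have "h (p, up) ! p = h (q, up') ! p" by simp
    with \<open>p < n\<close> \<open>q < n\<close> show "p = q \<and> up = up'"
      by (auto simp: h_def u_def nth_list_update split: if_splits)
  qed
  ultimately have "card ({..<n} \<times> (UNIV :: bool set)) \<le> pell_degree n k u"
    using card_le_pell_degree[of h "{..<n} \<times> UNIV" n k u] by auto
  then show ?thesis by (simp add: u_def card_cartesian_product)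
qed

lemma pell_neighbours_top_blocks:
  assumes "2 \<le> k" "r \<le> 1"
    and adj: "pell_adj (2 * m + r) k (replicate (2 * m) k @ replicate r 0) v"
  shows "(\<exists>j<m. v = replicate (2 * j) k @ [k - 1, k - 1] @ replicate (2 * (m - Suc j)) k
                  @ replicate r 0)
    \<or> (r = 1 \<and> v = replicate (2 * m) k @ [1])"
proof -
  define w where "w = replicate (2 * m) k @ replicate r (0 :: nat)"
  have nth_w: "w ! p = (if p < 2 * m then k else 0)" if "p < 2 * m + r" for p
    using that by (auto simp: w_def nth_append)
  have set_w: "set w \<subseteq> {k, 0}" by (auto simp: w_def)
  have "pell_step k w v \<or> pell_step k v w" and v: "pell_string k v"
    using adj by (auto simp: w_def pell_adj_def pell_vertices_def)
  then show ?thesis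
    unfolding pell_step_def
  proof (elim disjE exE conjE)
    fix x y i assume step: "i + 2 \<le> k" "w = x @ [i] @ y" "v = x @ [i + 1] @ y"
    have "length x < 2 * m + r" "w ! length x = i"
      using step(2) by (auto simp: w_def dest: arg_cong[of _ _ length])
    then have x: "length x = 2 * m" "r = 1" "i = 0"
      using nth_w[of "length x"] step(1) assms(2) by (auto split: if_splits)
    then have "x = replicate (2 * m) k" "y = []"
      using arg_cong[OF step(2), of "take (length x)"] arg_cong[OF step(2), of length]
      by (auto simp: w_def)
    then show ?thesis using step(3) x by simp
  next
    fix x y assume "w = x @ [k - 1, k - 1] @ y"
    then have "k - 1 \<in> set w" by simp
    then show ?thesis using set_w assms(1) by auto
  next
    fix x y i assume "i + 2 \<le> k" "v = x @ [i] @ y" "w = x @ [i + 1] @ y"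
    then have "i + 1 \<in> set w" by simp
    then show ?thesis using set_w \<open>i + 2 \<le> k\<close> by auto
  next
    fix x y assume step: "v = x @ [k - 1, k - 1] @ y" "w = x @ [k, k] @ y"
    have "Suc (length x) < 2 * m + r" "w ! Suc (length x) = k"
      using step(2) by (auto simp: w_def nth_append dest: arg_cong[of _ _ length])
    then have lx: "Suc (length x) < 2 * m"
      using nth_w[of "Suc (length x)"] assms(1) by (auto split: if_splits)
    then have x: "x = replicate (length x) k"
      using arg_cong[OF step(2), of "take (length x)"] by (simp add: w_def)
    then have "even (length x)"
      using pell_string_top_prefix_even[of k "length x" "k - 1"] v step(1) assms(1) by simp
    then obtain j where j: "length x = 2 * j" by blast
    with lx have "j < m" by simp
    have "y = replicate (2 * (m - Suc j)) k @ replicate r 0"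
      using arg_cong[OF step(2), of "drop (length x + 2)"] lx j by (simp add: w_def diff_mult_distrib2)
    then show ?thesis using step(1) x j \<open>j < m\<close> by auto
  qed
qed

lemma pell_degree_top_blocks_le:
  assumes "2 \<le> k" "r \<le> 1"
  shows "pell_degree (2 * m + r) k (replicate (2 * m) k @ replicate r 0) \<le> m + r"
proof -
  define f where "f j = replicate (2 * j) k @ [k - 1, k - 1] @ replicate (2 * (m - Suc j)) k @ replicate r 0"
    for j
  define S where "S = f ` {..<m} \<union> (if r = 1 then {replicate (2 * m) k @ [1]} else {})"
  have "{v. pell_adj (2 * m + r) k (replicate (2 * m) k @ replicate r 0) v} \<subseteq> S"
  proof
    fix v assume "v \<in> {v. pell_adj (2 * m + r) k (replicate (2 * m) k @ replicate r 0) v}"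
    then have "(\<exists>j<m. v = f j) \<or> (r = 1 \<and> v = replicate (2 * m) k @ [1])"
      unfolding f_def using pell_neighbours_top_blocks[OF assms] by simp
    then show "v \<in> S" unfolding S_def by auto
  qed
  then have "pell_degree (2 * m + r) k (replicate (2 * m) k @ replicate r 0) \<le> card S"
    unfolding pell_degree_def S_def by (intro card_mono) auto
  also have "\<dots> \<le> card (f ` {..<m}) + card (if r = 1 then {replicate (2 * m) k @ [1]} else {})"
    unfolding S_def by (rule card_Un_le)
  also have "\<dots> \<le> m + r"
    using card_image_le[of "{..<m}" f] by (intro add_mono) auto
  finally show ?thesis .
qed

lemma top_blocks_in_pell_vertices:
  assumes "1 \<le> k"
  shows "replicate (2 * m) k @ replicate r 0 \<in> pell_vertices (2 * m + r) k"
proof -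
  have "replicate (2 * m) k = concat (replicate m [k, k])"
    by (induction m) auto
  then have "pell_string k (replicate (2 * m) k)"
    using pell_string_concat[of "replicate m [k, k]" k] by (simp add: pell_token_def)
  moreover have "pell_string k (replicate r 0)"
    using assms by (intro pell_string_if_letters_less) auto
  ultimately show ?thesis
    by (simp add: pell_vertices_def pell_string_append)
qed

theorem corollary5p5:
  fixes n k :: nat
  assumes "n \<ge> 1" and "k \<ge> 3"
  shows "pell_max_degree n k = 2 * n \<and> pell_min_degree n k = (n + 1) div 2"
proof
  have finite_degrees: "finite (pell_degree n k ` pell_vertices n k)"
    using finite_pell_vertices by simp
  have "replicate n 1 \<in> pell_vertices n k"
    using assms(2) by (auto simp: pell_vertices_def intro!: pell_string_if_letters_less)
  moreover have "pell_degree n k (replicate n 1) = 2 * n"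
    using pell_degree_le[of "replicate n 1" n k] pell_degree_replicate_one[OF assms(2), of n]
    by simp
  ultimately have max_attained: "2 * n \<in> pell_degree n k ` pell_vertices n k"
    by (metis rev_image_eqI)
  show "pell_max_degree n k = 2 * n"
    unfolding pell_max_degree_def
    by (rule Max_eqI[OF finite_degrees _ max_attained]) (auto simp: pell_vertices_def intro: pell_degree_le)
  define m r where "m = n div 2" and "r = n mod 2"
  have n: "n = 2 * m + r" "r \<le> 1" "(n + 1) div 2 = m + r"
    unfolding m_def r_def by presburger+
  let ?w = "replicate (2 * m) k @ replicate r 0"
  have w: "?w \<in> pell_vertices n k"
    using top_blocks_in_pell_vertices[of k m r] assms(2) n(1) by simp
  moreover have "pell_degree n k ?w = (n + 1) div 2"
    using pell_degree_top_blocks_le[of k r m] pell_degree_ge_half[OF _ w] assms(2) n by simp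
  ultimately have min_attained: "(n + 1) div 2 \<in> pell_degree n k ` pell_vertices n k"
    by (metis rev_image_eqI)
  show "pell_min_degree n k = (n + 1) div 2"
    unfolding pell_min_degree_def
    by (rule Min_eqI[OF finite_degrees _ min_attained]) (use assms(2) pell_degree_ge_half in auto)
qed

end
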